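(* Let $u_0,\dots,u_4$ be complex numbers with $M_i(U)\neq0$ for all $i$, and let $Y\subset\mathbb{P}^4=\mathrm{Proj}\,\mathbb{C}[v_0,\dots,v_4]$ be the quintic $\sum_{i=0}^4M_i(U)v_i^5=0$ (the image of the Fermat quintic under a diagonal rescaling of coordinates). Let $P=[1:1:1:1:1]$, $Q=[u_0:\dots:u_4]$ (both lying on $Y$), and let $\Lambda$ be the plane $\sum_iM_i(U)v_i=0,\ \sum_iM_i(U)u_i^4v_i=0$. For $b=(b_0,\dots,b_5)\in\mathbb{C}^6$ consider the conic $C_b$, the image of $\gamma_b:\mathbb{P}^1\to\mathbb{P}^4$, $\gamma_b([t:s])=[t^2+b_its+u_ib_5^2s^2]_{i=0,\dots,4}$, which passes through $P=\gamma_b([1:0])$ and $Q=\gamma_b([0:1])$, and let $B=[b_0:\dots:b_4]$. Then the condition $C_b\subset\Lambda$ and $C_b\cdot(Y\cap\Lambda)\ge 3P+3Q$ in $\Lambda$ is equivalent to $B\in\Lambda\cap\Gamma_U\cap\Gamma_{\iota(U)}$, where $\Gamma_U$ and $\Gamma_{\iota(U)}$ are the quadrics in $\mathbb{P}^4$ given by $\sum_{i=0}^4M_i(U)v_i^2=0$ and $\sum_{i=0}^4M_i(U)u_i^3v_i^2=0$ respectively.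
   Context: For $U=(u_0,\dots,u_4)$: for each $i$, $e_1(i),e_2(i),e_3(i)$ denote the elementary symmetric polynomials in the four variables $\{u_j\}_{j\neq i}$; $d_i=\prod_{j,k\neq i,\,j>k}(u_j-u_k)$; $n_i=e_2(i)^2-e_1(i)e_3(i)$; $M_i(U)=(-1)^id_in_i$. These satisfy $\sum_iM_i(U)u_i^k=0$ for $k\in\{0,1,4,5\}$. For a plane curve $Z\subset\Lambda$ and a curve $C\subset\Lambda$, $C\cdot Z\ge 3P+3Q$ means the local intersection multiplicities of $C$ and $Z$ at $P$ and at $Q$ are each at least $3$. *)

theory Defs
  imports "HOL-Computational_Algebra.Polynomial"
begin

text \<open>Points of P^4 are represented by coordinate functions nat => complex
  (coordinates 0..4); U = (u_0,...,u_4).\<close>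

definition idx_rest :: "nat \<Rightarrow> nat set" where
  "idx_rest i = {0..<5} - {i}"

definition esym :: "(nat \<Rightarrow> complex) \<Rightarrow> nat \<Rightarrow> nat \<Rightarrow> complex" where
  "esym U i k = (\<Sum>S\<in>{S. S \<subseteq> idx_rest i \<and> card S = k}. \<Prod>j\<in>S. U j)"

definition dM :: "(nat \<Rightarrow> complex) \<Rightarrow> nat \<Rightarrow> complex" where
  "dM U i = (\<Prod>(j,k)\<in>{(j,k). j \<in> idx_rest i \<and> k \<in> idx_rest i \<and> j > k}. U j - U k)"

definition nM :: "(nat \<Rightarrow> complex) \<Rightarrow> nat \<Rightarrow> complex" where
  "nM U i = (esym U i 2)^2 - esym U i 1 * esym U i 3"

definition M :: "(nat \<Rightarrow> complex) \<Rightarrow> nat \<Rightarrow> complex" where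
  "M U i = (-1)^i * dM U i * nM U i"

definition quinticY :: "(nat \<Rightarrow> complex) \<Rightarrow> (nat \<Rightarrow> complex) \<Rightarrow> complex" where
  "quinticY U v = (\<Sum>i<5. M U i * v i ^ 5)"

definition in_Lambda :: "(nat \<Rightarrow> complex) \<Rightarrow> (nat \<Rightarrow> complex) \<Rightarrow> bool" where
  "in_Lambda U v \<longleftrightarrow> (\<Sum>i<5. M U i * v i) = 0 \<and> (\<Sum>i<5. M U i * U i ^ 4 * v i) = 0"

definition in_Gamma_U :: "(nat \<Rightarrow> complex) \<Rightarrow> (nat \<Rightarrow> complex) \<Rightarrow> bool" where
  "in_Gamma_U U v \<longleftrightarrow> (\<Sum>i<5. M U i * v i ^ 2) = 0"

definition in_Gamma_iota :: "(nat \<Rightarrow> complex) \<Rightarrow> (nat \<Rightarrow> complex) \<Rightarrow> bool" where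
  "in_Gamma_iota U v \<longleftrightarrow> (\<Sum>i<5. M U i * U i ^ 3 * v i ^ 2) = 0"

definition gamma :: "(nat \<Rightarrow> complex) \<Rightarrow> (nat \<Rightarrow> complex) \<Rightarrow> complex \<Rightarrow> complex \<Rightarrow> nat \<Rightarrow> complex" where
  "gamma U b t s i = t^2 + b i * t * s + U i * (b 5)^2 * s^2"

text \<open>Coordinates of gamma_b as univariate polynomials in the affine charts of P^1
  around [1:0] (parameter s, t = 1) and around [0:1] (parameter t, s = 1).\<close>
definition gamma_chart_P :: "(nat \<Rightarrow> complex) \<Rightarrow> (nat \<Rightarrow> complex) \<Rightarrow> nat \<Rightarrow> complex poly" where
  "gamma_chart_P U b i = [:1, b i, U i * (b 5)^2:]"

definition gamma_chart_Q :: "(nat \<Rightarrow> complex) \<Rightarrow> (nat \<Rightarrow> complex) \<Rightarrow> nat \<Rightarrow> complex poly" where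
  "gamma_chart_Q U b i = [:U i * (b 5)^2, b i, 1:]"

definition pullback_Y :: "(nat \<Rightarrow> complex) \<Rightarrow> (nat \<Rightarrow> complex poly) \<Rightarrow> complex poly" where
  "pullback_Y U g = (\<Sum>i<5. smult (M U i) (g i ^ 5))"

text \<open>Local intersection multiplicity of the parametrised curve with Y \<inter> Lambda at the
  point with parameter 0 is at least k: the pulled back equation vanishes to order
  \<ge> k at 0 (including the case that it vanishes identically, i.e. infinite multiplicity).\<close>
definition int_mult_ge :: "(nat \<Rightarrow> complex) \<Rightarrow> (nat \<Rightarrow> complex poly) \<Rightarrow> nat \<Rightarrow> bool" where
  "int_mult_ge U g k \<longleftrightarrow> monom 1 k dvd pullback_Y U g"

end

theory Submission
  imports Defs
begin

text \<open>Everything is linear algebra in the sums \<Sum> M_i u_i^k b_i^m. The conic lies in Lambda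
  iff B does, and the order of contact with Y at P (resp. Q) is read off
  the first three Taylor coefficients of the quintic pulled back along the conic in the chart at
  [1:0] (resp. [0:1]). Expanding, these coefficients involve the sums with m = 0 and
  k \<in> {0,1,4,5}, which vanish identically in U, and otherwise exactly the linear forms of Lambda
  and the quadratic forms of Gamma_U and Gamma_iota(U) at B, up to powers of b_5 \<noteq> 0.\<close>

definition esym_set :: "('a \<Rightarrow> 'b::comm_semiring_1) \<Rightarrow> 'a set \<Rightarrow> nat \<Rightarrow> 'b" where
  "esym_set f A k = (\<Sum>S\<in>{S. S \<subseteq> A \<and> card S = k}. \<Prod>j\<in>S. f j)"

lemma esym_set_0:
  assumes "finite A"
  shows "esym_set f A 0 = 1"
proof -
  from assms have "{S. S \<subseteq> A \<and> card S = 0} = {{}}"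
    using finite_subset by (auto simp: card_eq_0_iff)
  then show ?thesis by (simp add: esym_set_def)
qed

lemma esym_set_empty_Suc: "esym_set f {} (Suc k) = 0"
  unfolding esym_set_def by (rule sum.neutral) auto

lemma subsets_card_Suc_insert:
  assumes "finite A" "x \<notin> A"
  shows "{S. S \<subseteq> insert x A \<and> card S = Suc k} =
     {S. S \<subseteq> A \<and> card S = Suc k} \<union> insert x ` {S. S \<subseteq> A \<and> card S = k}"
proof (intro equalityI subsetI)
  fix S assume S: "S \<in> {S. S \<subseteq> insert x A \<and> card S = Suc k}"
  then have "finite S" using assms(1) finite_subset by auto
  with S show "S \<in> {S. S \<subseteq> A \<and> card S = Suc k} \<union> insert x ` {S. S \<subseteq> A \<and> card S = k}"
    by (cases "x \<in> S") (auto intro!: image_eqI[where x = "S - {x}"])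
next
  fix S assume "S \<in> {S. S \<subseteq> A \<and> card S = Suc k} \<union> insert x ` {S. S \<subseteq> A \<and> card S = k}"
  then show "S \<in> {S. S \<subseteq> insert x A \<and> card S = Suc k}"
    using assms finite_subset by (fastforce simp: card_insert_if)
qed

lemma esym_set_insert:
  assumes fin: "finite A" and x: "x \<notin> A"
  shows "esym_set f (insert x A) (Suc k) = esym_set f A (Suc k) + f x * esym_set f A k"
proof -
  let ?small = "{S. S \<subseteq> A \<and> card S = k}"
  have inj: "inj_on (insert x) ?small"
    using x by (intro inj_onI) (metis (no_types, lifting) insert_ident mem_Collect_eq subsetD)
  have disj: "{S. S \<subseteq> A \<and> card S = Suc k} \<inter> insert x ` ?small = {}"
    using x by auto
  have "esym_set f (insert x A) (Suc k)
      = esym_set f A (Suc k) + (\<Sum>T\<in>?small. \<Prod>j\<in>insert x T. f j)"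
    unfolding esym_set_def subsets_card_Suc_insert[OF fin x]
    using fin by (simp add: sum.union_disjoint[OF _ _ disj] sum.reindex[OF inj])
  also have "(\<Sum>T\<in>?small. \<Prod>j\<in>insert x T. f j) = (\<Sum>T\<in>?small. f x * (\<Prod>j\<in>T. f j))"
  proof (rule sum.cong[OF refl])
    fix T assume "T \<in> ?small"
    then have "finite T" "x \<notin> T" using fin x finite_subset by auto
    then show "(\<Prod>j\<in>insert x T. f j) = f x * (\<Prod>j\<in>T. f j)" by simp
  qed
  finally show ?thesis by (simp add: esym_set_def sum_distrib_left)
qed

lemma esym_set_4:
  assumes "distinct [p, q, r, s]"
  shows "esym_set f {p, q, r, s} 1 = f p + f q + f r + f s"
    and "esym_set f {p, q, r, s} 2 = f p * f q + f p * f r + f p * f s + f q * f r + f q * f s + f r * f s"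
    and "esym_set f {p, q, r, s} 3 = f p * f q * f r + f p * f q * f s + f p * f r * f s + f q * f r * f s"
  using assms
  by (simp_all add: esym_set_insert esym_set_0 esym_set_empty_Suc numeral_eq_Suc algebra_simps)

definition diff_prod4 :: "'a::comm_ring_1 \<Rightarrow> 'a \<Rightarrow> 'a \<Rightarrow> 'a \<Rightarrow> 'a" where
  "diff_prod4 p q r s = (q - p) * (r - p) * (s - p) * (r - q) * (s - q) * (s - r)"

definition nM4 :: "'a::comm_ring_1 \<Rightarrow> 'a \<Rightarrow> 'a \<Rightarrow> 'a \<Rightarrow> 'a" where
  "nM4 p q r s =
     (p * q + p * r + p * s + q * r + q * s + r * s)^2
     - (p + q + r + s) * (p * q * r + p * q * s + p * r * s + q * r * s)"

lemma M_eq_diff_prod4_nM4: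
  assumes rest: "idx_rest i = {p, q, r, s}" and ord: "p < q" "q < r" "r < s"
  shows "M U i = (-1)^i * diff_prod4 (U p) (U q) (U r) (U s) * nM4 (U p) (U q) (U r) (U s)"
proof -
  have pairs: "{(j, k). j \<in> idx_rest i \<and> k \<in> idx_rest i \<and> j > k}
      = {(q, p), (r, p), (s, p), (r, q), (s, q), (s, r)}"
    unfolding rest using ord by auto
  have "dM U i = diff_prod4 (U p) (U q) (U r) (U s)"
    unfolding dM_def pairs diff_prod4_def using ord by (simp add: algebra_simps)
  moreover have "nM U i = nM4 (U p) (U q) (U r) (U s)"
    using esym_set_4[of p q r s U] ord
    unfolding nM_def nM4_def esym_def rest by (simp add: esym_set_def)
  ultimately show ?thesis by (simp add: M_def)
qed

lemma idx_rest_explicit: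
  "idx_rest 0 = {1, 2, 3, 4}" "idx_rest 1 = {0, 2, 3, 4}" "idx_rest 2 = {0, 1, 3, 4}"
  "idx_rest 3 = {0, 1, 2, 4}" "idx_rest 4 = {0, 1, 2, 3}"
  by (auto simp: idx_rest_def)

lemma M_explicit:
  "M U 0 = diff_prod4 (U 1) (U 2) (U 3) (U 4) * nM4 (U 1) (U 2) (U 3) (U 4)"
  "M U 1 = - diff_prod4 (U 0) (U 2) (U 3) (U 4) * nM4 (U 0) (U 2) (U 3) (U 4)"
  "M U 2 = diff_prod4 (U 0) (U 1) (U 3) (U 4) * nM4 (U 0) (U 1) (U 3) (U 4)"
  "M U 3 = - diff_prod4 (U 0) (U 1) (U 2) (U 4) * nM4 (U 0) (U 1) (U 2) (U 4)"
  "M U 4 = diff_prod4 (U 0) (U 1) (U 2) (U 3) * nM4 (U 0) (U 1) (U 2) (U 3)"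
  using idx_rest_explicit[THEN M_eq_diff_prod4_nM4, where U = U] by simp_all

lemma sum_lessThan_5:
  fixes f :: "nat \<Rightarrow> 'a::comm_monoid_add"
  shows "(\<Sum>i<5. f i) = f 0 + f 1 + f 2 + f 3 + f 4"
  by (simp add: numeral_eq_Suc)

lemma sum_M_mult_power_eq_0:
  "(\<Sum>i<5. M U i) = 0"
  "(\<Sum>i<5. M U i * U i) = 0"
  "(\<Sum>i<5. M U i * U i ^ 4) = 0"
  "(\<Sum>i<5. M U i * U i ^ 5) = 0"
  unfolding sum_lessThan_5 M_explicit diff_prod4_def nM4_def by algebra+

lemma sum_weighted_gamma:
  "(\<Sum>i<5. w i * gamma U b t s i)
     = t^2 * (\<Sum>i<5. w i) + t * s * (\<Sum>i<5. w i * b i) + (b 5)^2 * s^2 * (\<Sum>i<5. w i * U i)"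
  unfolding gamma_def
  by (simp add: algebra_simps sum.distrib sum_distrib_left)

lemma conic_in_Lambda_iff: "(\<forall>t s. in_Lambda U (gamma U b t s)) \<longleftrightarrow> in_Lambda U b"
proof -
  have sum_M_U4_U: "(\<Sum>i<5. M U i * U i ^ 4 * U i) = 0"
    using sum_M_mult_power_eq_0(4) by (simp add: mult.assoc power_Suc2[symmetric] del: power_Suc)
  have lin: "(\<Sum>i<5. M U i * gamma U b t s i) = t * s * (\<Sum>i<5. M U i * b i)"
    "(\<Sum>i<5. M U i * U i ^ 4 * gamma U b t s i) = t * s * (\<Sum>i<5. M U i * U i ^ 4 * b i)"
    for t s
    unfolding sum_weighted_gamma sum_M_mult_power_eq_0 sum_M_U4_U by simp_all
  show ?thesis
  proof
    assume "\<forall>t s. in_Lambda U (gamma U b t s)"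
    then have "in_Lambda U (gamma U b 1 1)" by blast
    then show "in_Lambda U b" unfolding in_Lambda_def lin by simp
  qed (simp only: in_Lambda_def lin mult_zero_right simp_thms)
qed

lemma coeff_quadratic_pow5:
  fixes x0 x1 x2 :: "'a::comm_ring_1"
  shows "coeff ([:x0, x1, x2:] ^ 5) 0 = x0 ^ 5"
    and "coeff ([:x0, x1, x2:] ^ 5) 1 = 5 * x0 ^ 4 * x1"
    and "coeff ([:x0, x1, x2:] ^ 5) 2 = 5 * x0 ^ 4 * x2 + 10 * x0 ^ 3 * x1 ^ 2"
  by (simp_all add: coeff_mult numeral_eq_Suc atMost_Suc power_Suc algebra_simps)

lemma coeff_pullback_Y_quadratic:
  "coeff (pullback_Y U (\<lambda>i. [:a i, c i, d i:])) 0 = (\<Sum>i<5. M U i * a i ^ 5)"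
  "coeff (pullback_Y U (\<lambda>i. [:a i, c i, d i:])) 1 = 5 * (\<Sum>i<5. M U i * a i ^ 4 * c i)"
  "coeff (pullback_Y U (\<lambda>i. [:a i, c i, d i:])) 2
     = 5 * (\<Sum>i<5. M U i * a i ^ 4 * d i) + 10 * (\<Sum>i<5. M U i * a i ^ 3 * c i ^ 2)"
  unfolding pullback_Y_def coeff_sum coeff_smult coeff_quadratic_pow5
  by (simp_all add: sum_distrib_left sum.distrib algebra_simps)

lemma int_mult_ge_3_iff:
  "int_mult_ge U g 3 \<longleftrightarrow>
     coeff (pullback_Y U g) 0 = 0 \<and> coeff (pullback_Y U g) 1 = 0 \<and> coeff (pullback_Y U g) 2 = 0"
proof -
  have "(\<forall>k<(3::nat). f k = 0) \<longleftrightarrow> f 0 = 0 \<and> f 1 = 0 \<and> f 2 = (0::complex)" for f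
    by (auto simp: numeral_3_eq_3 numeral_2_eq_2 less_Suc_eq)
  then show ?thesis unfolding int_mult_ge_def monom_1_dvd_iff' by blast
qed

lemma int_mult_ge_chart_P_iff:
  "int_mult_ge U (gamma_chart_P U b) 3 \<longleftrightarrow> (\<Sum>i<5. M U i * b i) = 0 \<and> in_Gamma_U U b"
proof -
  have chart: "gamma_chart_P U b = (\<lambda>i. [:1, b i, U i * b 5 ^ 2:])"
    by (simp add: gamma_chart_P_def fun_eq_iff)
  have "(\<Sum>i<5. M U i * (U i * b 5 ^ 2)) = (\<Sum>i<5. M U i * U i) * b 5 ^ 2"
    by (simp add: sum_distrib_left sum_distrib_right mult_ac)
  then show ?thesis
    unfolding int_mult_ge_3_iff chart coeff_pullback_Y_quadratic in_Gamma_U_def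
    by (simp add: sum_M_mult_power_eq_0)
qed

lemma int_mult_ge_chart_Q_iff:
  assumes "b 5 \<noteq> 0"
  shows "int_mult_ge U (gamma_chart_Q U b) 3 \<longleftrightarrow>
    (\<Sum>i<5. M U i * U i ^ 4 * b i) = 0 \<and> in_Gamma_iota U b"
proof -
  define c where "c = b 5 ^ 2"
  have "c \<noteq> 0" using assms by (simp add: c_def)
  have chart: "gamma_chart_Q U b = (\<lambda>i. [:U i * c, b i, 1:])"
    by (simp add: gamma_chart_Q_def c_def fun_eq_iff)
  have "(\<Sum>i<5. M U i * (U i * c) ^ 5) = c ^ 5 * (\<Sum>i<5. M U i * U i ^ 5)"
    and "(\<Sum>i<5. M U i * (U i * c) ^ 4 * b i) = c ^ 4 * (\<Sum>i<5. M U i * U i ^ 4 * b i)"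
    and "(\<Sum>i<5. M U i * (U i * c) ^ 4 * 1) = c ^ 4 * (\<Sum>i<5. M U i * U i ^ 4)"
    and "(\<Sum>i<5. M U i * (U i * c) ^ 3 * b i ^ 2) = c ^ 3 * (\<Sum>i<5. M U i * U i ^ 3 * b i ^ 2)"
    by (simp_all add: sum_distrib_left power_mult_distrib mult_ac)
  with \<open>c \<noteq> 0\<close> show ?thesis
    unfolding int_mult_ge_3_iff chart coeff_pullback_Y_quadratic in_Gamma_iota_def
    by (simp add: sum_M_mult_power_eq_0)
qed

theorem mainTheorem4:
  fixes U :: "nat \<Rightarrow> complex" and b :: "nat \<Rightarrow> complex"
  assumes hM: "\<forall>i<5. M U i \<noteq> 0"
    and hb5: "b 5 \<noteq> 0"
  shows "((\<forall>t s. in_Lambda U (gamma U b t s))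
            \<and> int_mult_ge U (gamma_chart_P U b) 3
            \<and> int_mult_ge U (gamma_chart_Q U b) 3)
         \<longleftrightarrow> (in_Lambda U b \<and> in_Gamma_U U b \<and> in_Gamma_iota U b)"
  unfolding conic_in_Lambda_iff int_mult_ge_chart_P_iff int_mult_ge_chart_Q_iff[of b, OF hb5]
  by (auto simp: in_Lambda_def)

end
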